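(* Let ${\tt D}=({\tt M},{\tt C},\equiv,\underline{\cdot})$ be a distillery. Then for every execution $\rho: s\to^* s'$ of ${\tt M}$ (starting from an initial state $s$) there is a derivation $d:\underline{s}\multimap^*\equiv\underline{s'}$ (i.e. a sequence of $\multimap$-steps from $\underline{s}$ to some term $t$ with $t\equiv\underline{s'}$) such that $|\rho|_{\mathtt m}=|d|_{\mathtt m}$, $|\rho|_{\mathtt e}=|d|_{\mathtt e}$ and $|\rho|_{\mathtt p}=|d|$.
   Context: A distillery ${\tt D}=({\tt M},{\tt C},\equiv,\underline{\cdot})$ consists of: (1) an abstract machine ${\tt M}$, i.e. a deterministic labelled transition system $\to$ on states, with a distinguished class of initial states (in bijection with closed $\lambda$-terms; states reachable from initial ones by $\to$ are called reachable), and a partition of the transitions into commutative ones ($\to_{\mathtt c}$) and principal ones, the latter partitioned into multiplicative ($\to_{\mathtt m}$) and exponential ($\to_{\mathtt e}$); (2) a calculus ${\tt C}$ given by two rewriting relations $\multimap_{\mathtt m},\multimap_{\mathtt e}$ on terms, with $\multimap:=\multimap_{\mathtt m}\cup\multimap_{\mathtt e}$; (3) an equivalence $\equiv$ on terms which is a strong bisimulation w.r.t. $\multimap_{\mathtt m}$ and $\multimap_{\mathtt e}$: for $\mathtt x\in\{\mathtt m,\mathtt e\}$, $t\equiv u$ and $t\multimap_{\mathtt x}t'$ imply that $u\multimap_{\mathtt x}u'$ for some $u'$ with $t'\equiv u'$; (4) a decoding function $\underline{\cdot}$ from states to terms such that, for reachable states $s$: $s\to_{\mathtt c}s'$ implies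 $\underline{s}\equiv\underline{s'}$; $s\to_{\mathtt m}s'$ implies $\underline{s}\multimap_{\mathtt m} t\equiv\underline{s'}$ for some $t$; $s\to_{\mathtt e}s'$ implies $\underline{s}\multimap_{\mathtt e}t\equiv\underline{s'}$ for some $t$. An execution is a sequence of transitions starting from an initial state. For an execution $\rho$, $|\rho|_{\mathtt m}$, $|\rho|_{\mathtt e}$, $|\rho|_{\mathtt p}$ denote its numbers of multiplicative, exponential and principal transitions; for a derivation $d$ (sequence of $\multimap$-steps), $|d|$ is its length and $|d|_{\mathtt m}$, $|d|_{\mathtt e}$ its numbers of $\multimap_{\mathtt m}$ and $\multimap_{\mathtt e}$ steps. *)

theory Defs
  imports Main
begin

datatype mlabel = Comm | Mult | Expo

datatype clabel = CMult | CExpo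

inductive mrun :: "('s \<Rightarrow> mlabel \<Rightarrow> 's \<Rightarrow> bool) \<Rightarrow> 's \<Rightarrow> (mlabel \<times> 's) list \<Rightarrow> 's \<Rightarrow> bool"
  for tr where
  mrun_nil: "mrun tr s [] s"
| mrun_cons: "tr s l s1 \<Longrightarrow> mrun tr s1 rho s' \<Longrightarrow> mrun tr s ((l, s1) # rho) s'"

inductive crun :: "(clabel \<Rightarrow> 't \<Rightarrow> 't \<Rightarrow> bool) \<Rightarrow> 't \<Rightarrow> (clabel \<times> 't) list \<Rightarrow> 't \<Rightarrow> bool"
  for red where
  crun_nil: "crun red t [] t"
| crun_cons: "red k t t1 \<Longrightarrow> crun red t1 d t' \<Longrightarrow> crun red t ((k, t1) # d) t'"

definition reachable :: "('s \<Rightarrow> mlabel \<Rightarrow> 's \<Rightarrow> bool) \<Rightarrow> 's set \<Rightarrow> 's \<Rightarrow> bool" where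
  "reachable tr init s \<longleftrightarrow> (\<exists>s0 \<in> init. \<exists>rho. mrun tr s0 rho s)"

definition mcount :: "mlabel \<Rightarrow> (mlabel \<times> 's) list \<Rightarrow> nat" where
  "mcount l rho = length (filter (\<lambda>p. fst p = l) rho)"

definition pcount :: "(mlabel \<times> 's) list \<Rightarrow> nat" where
  "pcount rho = length (filter (\<lambda>p. fst p \<noteq> Comm) rho)"

definition ccount :: "clabel \<Rightarrow> (clabel \<times> 't) list \<Rightarrow> nat" where
  "ccount k d = length (filter (\<lambda>p. fst p = k) d)"

text \<open>Parameters: machine transition relation tr (labelled),
  set of initial states init, set of closed lambda-terms closed with a bijection compile onto
  init, calculus rewriting red (labelled by m/e), equivalence eqv, decoding dec.\<close>
definition distillery ::
  "('s \<Rightarrow> mlabel \<Rightarrow> 's \<Rightarrow> bool) \<Rightarrow> 's set \<Rightarrow> 't set \<Rightarrow> ('t \<Rightarrow> 's)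
   \<Rightarrow> (clabel \<Rightarrow> 't \<Rightarrow> 't \<Rightarrow> bool) \<Rightarrow> ('t \<Rightarrow> 't \<Rightarrow> bool) \<Rightarrow> ('s \<Rightarrow> 't) \<Rightarrow> bool" where
  "distillery tr init closed compile red eqv dec \<longleftrightarrow>
     (\<forall>s l1 s1 l2 s2. tr s l1 s1 \<longrightarrow> tr s l2 s2 \<longrightarrow> l1 = l2 \<and> s1 = s2)
   \<and> bij_betw compile closed init
   \<and> equivp eqv
   \<and> (\<forall>k t u t'. eqv t u \<longrightarrow> red k t t' \<longrightarrow> (\<exists>u'. red k u u' \<and> eqv t' u'))
   \<and> (\<forall>s s'. reachable tr init s \<longrightarrow> tr s Comm s' \<longrightarrow> eqv (dec s) (dec s'))
   \<and> (\<forall>s s'. reachable tr init s \<longrightarrow> tr s Mult s' \<longrightarrow> (\<exists>t. red CMult (dec s) t \<and> eqv t (dec s')))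
   \<and> (\<forall>s s'. reachable tr init s \<longrightarrow> tr s Expo s' \<longrightarrow> (\<exists>t. red CExpo (dec s) t \<and> eqv t (dec s')))"

end

theory Submission
  imports Defs
begin

text \<open>The simulation runs by induction on the execution, maintaining a term \<open>u\<close> with
  \<open>u \<equiv> dec s\<close> for the current state \<open>s\<close>. A commutative transition keeps \<open>u\<close>, since \<open>\<equiv>\<close>
  absorbs it. A principal transition gives a step \<open>dec s \<multimap> t \<equiv> dec s'\<close> of the same kind,
  which strong bisimulation transports to a step \<open>u \<multimap> u' \<equiv> t\<close>, restoring the invariant.\<close>

definition counts_match :: "(mlabel \<times> 's) list \<Rightarrow> (clabel \<times> 't) list \<Rightarrow> bool" where
  "counts_match rho d \<longleftrightarrow>
     mcount Mult rho = ccount CMult d \<and> mcount Expo rho = ccount CExpo d \<and> pcount rho = length d"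

lemma counts_match_Nil: "counts_match [] []"
  by (simp add: counts_match_def mcount_def ccount_def pcount_def)

lemma counts_match_Comm: "counts_match rho d \<Longrightarrow> counts_match ((Comm, s) # rho) d"
  by (simp add: counts_match_def mcount_def pcount_def)

lemma counts_match_Mult: "counts_match rho d \<Longrightarrow> counts_match ((Mult, s) # rho) ((CMult, t) # d)"
  by (simp add: counts_match_def mcount_def ccount_def pcount_def)

lemma counts_match_Expo: "counts_match rho d \<Longrightarrow> counts_match ((Expo, s) # rho) ((CExpo, t) # d)"
  by (simp add: counts_match_def mcount_def ccount_def pcount_def)

lemma mrun_snoc: "mrun tr s0 rho s \<Longrightarrow> tr s l s1 \<Longrightarrow> mrun tr s0 (rho @ [(l, s1)]) s1"
  by (induction rule: mrun.induct) (auto intro: mrun.intros)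

lemma reachable_init: "s \<in> init \<Longrightarrow> reachable tr init s"
  unfolding reachable_def using mrun_nil[of tr s] by blast

lemma reachable_step: "reachable tr init s \<Longrightarrow> tr s l s1 \<Longrightarrow> reachable tr init s1"
  unfolding reachable_def using mrun_snoc[of tr _ _ s l s1] by blast

locale decoding_simulation =
  fixes tr :: "'s \<Rightarrow> mlabel \<Rightarrow> 's \<Rightarrow> bool" and init :: "'s set"
    and red :: "clabel \<Rightarrow> 't \<Rightarrow> 't \<Rightarrow> bool" and eqv :: "'t \<Rightarrow> 't \<Rightarrow> bool" and dec :: "'s \<Rightarrow> 't"
  assumes equivp_eqv: "equivp eqv"
    and strong_bisim: "eqv t u \<Longrightarrow> red k t t' \<Longrightarrow> \<exists>u'. red k u u' \<and> eqv t' u'"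
    and comm_step: "reachable tr init s \<Longrightarrow> tr s Comm s' \<Longrightarrow> eqv (dec s) (dec s')"
    and mult_step: "reachable tr init s \<Longrightarrow> tr s Mult s' \<Longrightarrow> \<exists>t. red CMult (dec s) t \<and> eqv t (dec s')"
    and expo_step: "reachable tr init s \<Longrightarrow> tr s Expo s' \<Longrightarrow> \<exists>t. red CExpo (dec s) t \<and> eqv t (dec s')"
begin

lemma eqv_sym: "eqv a b \<Longrightarrow> eqv b a"
  using equivp_eqv by (rule equivp_symp)

lemma eqv_trans: "eqv a b \<Longrightarrow> eqv b c \<Longrightarrow> eqv a c"
  using equivp_eqv by (rule equivp_transp)

lemma red_transfer:
  assumes "eqv u (dec s)" and "red k (dec s) t" and "eqv t (dec s1)"
  shows "\<exists>u'. red k u u' \<and> eqv u' (dec s1)"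
proof -
  obtain u' where "red k u u'" and "eqv t u'"
    using strong_bisim[OF eqv_sym[OF assms(1)] assms(2)] by blast
  then show ?thesis using eqv_trans[OF eqv_sym assms(3)] by blast
qed

lemma simulation_up_to_eqv:
  assumes "mrun tr s rho s'" and "reachable tr init s" and "eqv u (dec s)"
  shows "\<exists>d t. crun red u d t \<and> eqv t (dec s') \<and> counts_match rho d"
  using assms
proof (induction arbitrary: u rule: mrun.induct)
  case (mrun_nil s)
  then show ?case using crun_nil[of red u] counts_match_Nil by blast
next
  case (mrun_cons s l s1 rho s')
  have reach1: "reachable tr init s1" using reachable_step mrun_cons.prems(1) mrun_cons.hyps(1) .
  show ?case
  proof (cases l)
    case Comm
    then have "eqv u (dec s1)"
      using eqv_trans[OF mrun_cons.prems(2) comm_step] mrun_cons.prems(1) mrun_cons.hyps(1) by blast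
    then obtain d t' where "crun red u d t'" "eqv t' (dec s')" "counts_match rho d"
      using mrun_cons.IH[OF reach1] by blast
    with Comm show ?thesis by (blast intro: counts_match_Comm)
  next
    case Mult
    then obtain t where "red CMult (dec s) t" and "eqv t (dec s1)"
      using mult_step mrun_cons.prems(1) mrun_cons.hyps(1) by blast
    then obtain u' where u': "red CMult u u'" "eqv u' (dec s1)"
      using red_transfer[OF mrun_cons.prems(2)] by blast
    obtain d t' where "crun red u' d t'" "eqv t' (dec s')" "counts_match rho d"
      using mrun_cons.IH[OF reach1 u'(2)] by blast
    with Mult show ?thesis by (blast intro: crun_cons[where red = red, OF u'(1)] counts_match_Mult)
  next
    case Expo
    then obtain t where "red CExpo (dec s) t" and "eqv t (dec s1)"
      using expo_step mrun_cons.prems(1) mrun_cons.hyps(1) by blast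
    then obtain u' where u': "red CExpo u u'" "eqv u' (dec s1)"
      using red_transfer[OF mrun_cons.prems(2)] by blast
    obtain d t' where "crun red u' d t'" "eqv t' (dec s')" "counts_match rho d"
      using mrun_cons.IH[OF reach1 u'(2)] by blast
    with Expo show ?thesis by (blast intro: crun_cons[where red = red, OF u'(1)] counts_match_Expo)
  qed
qed

end

lemma distillery_decoding_simulation:
  "distillery tr init closed compile red eqv dec \<Longrightarrow> decoding_simulation tr init red eqv dec"
  unfolding distillery_def by unfold_locales blast+

theorem mainTheorem3:
  assumes "distillery tr init closed compile red eqv dec"
    and "s \<in> init"
    and "mrun tr s rho s'"
  shows "\<exists>d t. crun red (dec s) d t \<and> eqv t (dec s')
           \<and> mcount Mult rho = ccount CMult d
           \<and> mcount Expo rho = ccount CExpo d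
           \<and> pcount rho = length d"
proof -
  interpret decoding_simulation tr init red eqv dec
    using assms(1) by (rule distillery_decoding_simulation)
  have "eqv (dec s) (dec s)" using equivp_eqv by (rule equivp_reflp)
  then show ?thesis
    using simulation_up_to_eqv[OF assms(3) reachable_init[OF assms(2)]]
    unfolding counts_match_def by blast
qed

end
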